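(* Let $\mathcal{S}$ be finite, $\Pi$ irreducible stochastic on $\mathcal{S}$, $\kappa(x,y):=\pi_{xy}-\mathbf{1}_{x=y}$, $\mathcal{K}=\Pi-\mathrm{I}$, $Q=(q(y))$ the invariant distribution, and assume detailed balance $q(y)\kappa(y,z)=q(z)\kappa(z,y)$ for all $y,z$. Let $\boldsymbol{\ell}_t=\ell(t,\cdot)$, $\ell(t,y):=p(t,y)/q(y)$, where $p(t,\cdot)$ is the time-$t$ law of the chain with generator $\mathcal{K}$ started from a positive initial distribution. Fix $t_0>0$, $\varepsilon>0$, a continuous curve $(\psi_t)_{t_0\le t<t_0+\varepsilon}$ of functions $\mathcal{S}\to\mathbb{R}$, and let $\ell^\psi$ solve $\ell^\psi_{t_0}=\boldsymbol{\ell}_{t_0}$, $\partial_t\ell^\psi(t,x)=\sum_y\widehat\kappa(x,y)\psi(t,y)$ with $\widehat\kappa(x,y):=q(y)\kappa(y,x)/q(x)$. Then for every $t\in[t_0,t_0+\varepsilon)$, $$\lim_{h\downarrow0}\frac1h\big\|\boldsymbol{\ell}_{t+h}-\boldsymbol{\ell}_t\big\|_{\mathbb{H}^{-1}(\mathcal{S},Q)}=\big\|\mathcal{K}\boldsymbol{\ell}_t\big\|_{\mathbb{H}^{-1}(\mathcal{S},Q)}=\big\|\boldsymbol{\ell}_t\big\|_{\mathbb{H}^1(\mathcal{S},Q)},$$ and $$\lim_{h\downarrow0}\frac1h\big\|\ell^\psi_{t+h}-\ell^\psi_t\big\|_{\mathbb{H}^{-1}(\mathcal{S},Q)}=\big\|\mathcal{K}\psi_t\big\|_{\mathbb{H}^{-1}(\mathcal{S},Q)}=\big\|\psi_t\big\|_{\mathbb{H}^1(\mathcal{S},Q)}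 .$$
   Context: $\nabla f(x,y):=f(y)-f(x)$; $\mathcal{Z}:=\{(x,y):\kappa(x,y)>0\}$, $c(x,y):=\frac12\kappa(x,y)q(x)$, $\|F\|^2_{\mathbb{L}^2(\mathcal{Z},C)}:=\sum_{(x,y)\in\mathcal{Z}}c(x,y)F(x,y)^2$. $\|f\|_{\mathbb{H}^1(\mathcal{S},Q)}:=\|\nabla f\|_{\mathbb{L}^2(\mathcal{Z},C)}$ (equal to $\mathcal{E}(f,f)^{1/2}$, $\mathcal{E}(f,g):=-\sum_yq(y)f(y)(\mathcal{K}g)(y)$). $\|f\|_{\mathbb{H}^{-1}(\mathcal{S},Q)}:=\|\nabla g\|_{\mathbb{L}^2(\mathcal{Z},C)}$ for any $g$ with $\mathcal{K}g=f$ if $f\in\mathrm{Range}(\mathcal{K})$, and $+\infty$ otherwise. *)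

theory Defs
  imports "HOL-Analysis.Analysis"
begin

definition stochastic :: "('a::finite \<Rightarrow> 'a \<Rightarrow> real) \<Rightarrow> bool" where
  "stochastic P \<longleftrightarrow> (\<forall>x y. P x y \<ge> 0) \<and> (\<forall>x. (\<Sum>y\<in>UNIV. P x y) = 1)"

fun mpow :: "('a::finite \<Rightarrow> 'a \<Rightarrow> real) \<Rightarrow> nat \<Rightarrow> 'a \<Rightarrow> 'a \<Rightarrow> real" where
  "mpow P 0 x y = (if x = y then 1 else 0)"
| "mpow P (Suc n) x y = (\<Sum>z\<in>UNIV. mpow P n x z * P z y)"

definition irreducible_chain :: "('a::finite \<Rightarrow> 'a \<Rightarrow> real) \<Rightarrow> bool" where
  "irreducible_chain P \<longleftrightarrow> (\<forall>x y. \<exists>n. mpow P n x y > 0)"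

definition kappa :: "('a \<Rightarrow> 'a \<Rightarrow> real) \<Rightarrow> 'a \<Rightarrow> 'a \<Rightarrow> real" where
  "kappa P x y = P x y - (if x = y then 1 else 0)"

definition gen :: "('a::finite \<Rightarrow> 'a \<Rightarrow> real) \<Rightarrow> ('a \<Rightarrow> real) \<Rightarrow> 'a \<Rightarrow> real" where
  "gen P g x = (\<Sum>y\<in>UNIV. kappa P x y * g y)"

definition invariant_distribution :: "('a::finite \<Rightarrow> 'a \<Rightarrow> real) \<Rightarrow> ('a \<Rightarrow> real) \<Rightarrow> bool" where
  "invariant_distribution P q \<longleftrightarrow> (\<forall>y. q y \<ge> 0) \<and> (\<Sum>y\<in>UNIV. q y) = 1
      \<and> (\<forall>y. (\<Sum>x\<in>UNIV. q x * P x y) = q y)"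

definition kappa_hat :: "('a \<Rightarrow> 'a \<Rightarrow> real) \<Rightarrow> ('a \<Rightarrow> real) \<Rightarrow> 'a \<Rightarrow> 'a \<Rightarrow> real" where
  "kappa_hat P q x y = q y * kappa P y x / q x"

definition edges :: "('a \<Rightarrow> 'a \<Rightarrow> real) \<Rightarrow> ('a \<times> 'a) set" where
  "edges P = {(x,y). kappa P x y > 0}"

definition cond :: "('a \<Rightarrow> 'a \<Rightarrow> real) \<Rightarrow> ('a \<Rightarrow> real) \<Rightarrow> 'a \<Rightarrow> 'a \<Rightarrow> real" where
  "cond P q x y = kappa P x y * q x / 2"

definition grad :: "('a \<Rightarrow> real) \<Rightarrow> 'a \<Rightarrow> 'a \<Rightarrow> real" where
  "grad f x y = f y - f x"

definition L2C_norm :: "('a::finite \<Rightarrow> 'a \<Rightarrow> real) \<Rightarrow> ('a \<Rightarrow> real) \<Rightarrow> ('a \<Rightarrow> 'a \<Rightarrow> real) \<Rightarrow> real" where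
  "L2C_norm P q F = sqrt (\<Sum>(x,y)\<in>edges P. cond P q x y * (F x y)\<^sup>2)"

definition H1_norm :: "('a::finite \<Rightarrow> 'a \<Rightarrow> real) \<Rightarrow> ('a \<Rightarrow> real) \<Rightarrow> ('a \<Rightarrow> real) \<Rightarrow> real" where
  "H1_norm P q f = L2C_norm P q (grad f)"

definition Hm1_norm :: "('a::finite \<Rightarrow> 'a \<Rightarrow> real) \<Rightarrow> ('a \<Rightarrow> real) \<Rightarrow> ('a \<Rightarrow> real) \<Rightarrow> ereal" where
  "Hm1_norm P q f = (if f \<in> range (gen P) then ereal (L2C_norm P q (grad (SOME g. gen P g = f)))
                     else \<infinity>)"

end

theory Submission
  imports Defs
begin

text \<open>Harmonic functions of an irreducible chain are constant by the maximum principle, so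
  \<open>K g\<close> determines \<open>\<nabla>g\<close> and the \<open>H\<^sup>-\<^sup>1\<close> norm of \<open>K g\<close> is the \<open>H\<^sup>1\<close> norm of \<open>g\<close>.
  Both curves solve an equation \<open>\<partial>\<^sub>t l(t) = K G(t)\<close> with \<open>G\<close> continuous: for the density
  \<open>l(t) = p(t)/q\<close> detailed balance turns the forward equation into \<open>\<partial>\<^sub>t l(t) = K l(t)\<close>,
  and it also gives \<open>\<kappa>_hat = \<kappa>\<close>, so \<open>G = \<psi>\<close> for \<open>l\<^sup>\<psi>\<close>. Hence \<open>l(t+h) - l(t) = K I(h)\<close>
  with \<open>I(h) = \<integral>\<^sub>t\<^sup>t\<^sup>+\<^sup>h G\<close>, so the difference quotient in \<open>H\<^sup>-\<^sup>1\<close> is the \<open>H\<^sup>1\<close> norm of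
  \<open>I(h)/h\<close>, which tends to \<open>G(t)\<close>. Neither the positivity of the initial law nor the initial value of
  \<open>l\<^sup>\<psi>\<close> is used.\<close>

lemma gen_eq_sum_minus_self: "gen P f z = (\<Sum>w\<in>UNIV. P z w * f w) - f z"
proof -
  have "gen P f z = (\<Sum>w\<in>UNIV. P z w * f w - (if z = w then f w else 0))"
    unfolding gen_def kappa_def by (intro sum.cong) (auto simp: algebra_simps)
  also have "\<dots> = (\<Sum>w\<in>UNIV. P z w * f w) - f z"
    by (simp add: sum_subtractf)
  finally show ?thesis .
qed

lemma gen_diff: "gen P (\<lambda>x. f x - g x) z = gen P f z - gen P g z"
  unfolding gen_def by (simp add: right_diff_distrib sum_subtractf)

lemma mpow_nonneg:
  assumes "stochastic P"
  shows "mpow P n x y \<ge> 0"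
  using assms by (induction n arbitrary: y) (auto simp: stochastic_def intro!: sum_nonneg)

lemma mpow_Suc_pos_obtain:
  assumes "stochastic P" and "mpow P (Suc n) x y > 0"
  obtains z where "mpow P n x z > 0" and "P z y > 0"
proof -
  obtain z where z: "mpow P n x z * P z y > 0"
    using assms(2) sum_nonpos[of UNIV "\<lambda>z. mpow P n x z * P z y"] by (force simp: not_less)
  have "mpow P n x z \<ge> 0" "P z y \<ge> 0"
    using assms(1) mpow_nonneg by (auto simp: stochastic_def)
  with z show thesis by (intro that) (auto simp: zero_less_mult_iff)
qed

lemma harmonic_max_propagates:
  assumes "stochastic P" and "gen P f z = 0"
    and le_M: "\<And>y. f y \<le> M" and "f z = M" and "P z w > 0"
  shows "f w = M"
proof -
  have "(\<Sum>w\<in>UNIV. P z w * f w) = M"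
    using assms(2,4) by (simp add: gen_eq_sum_minus_self)
  moreover have "(\<Sum>w\<in>UNIV. P z w * M) = M"
    using assms(1) by (simp add: stochastic_def sum_distrib_right[symmetric])
  ultimately have "(\<Sum>w\<in>UNIV. P z w * (M - f w)) = 0"
    by (simp add: right_diff_distrib sum_subtractf)
  moreover have "\<And>w. P z w * (M - f w) \<ge> 0"
    using assms(1) le_M by (simp add: stochastic_def)
  ultimately have "P z w * (M - f w) = 0"
    by (simp add: sum_nonneg_eq_0_iff)
  with assms(5) show ?thesis by simp
qed

lemma harmonic_imp_constant:
  fixes P :: "'a::finite \<Rightarrow> 'a \<Rightarrow> real"
  assumes st: "stochastic P" and irr: "irreducible_chain P" and harm: "\<And>z. gen P f z = 0"
  shows "f y = f z"
proof -
  define M where "M = Max (range f)"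
  have le_M: "\<And>y. f y \<le> M"
    unfolding M_def by simp
  have "M \<in> range f"
    unfolding M_def by (intro Max_in) auto
  then obtain x0 where x0: "f x0 = M" by auto
  have "f y = M" if "mpow P n x0 y > 0" for n y
    using that
  proof (induction n arbitrary: y)
    case 0
    then show ?case using x0 by (simp split: if_splits)
  next
    case (Suc n)
    then obtain z where "mpow P n x0 z > 0" and "P z y > 0"
      using mpow_Suc_pos_obtain[OF st] by blast
    with Suc.IH show ?case
      using harmonic_max_propagates[OF st harm le_M] by blast
  qed
  then have "\<And>y. f y = M"
    using irr unfolding irreducible_chain_def by blast
  then show ?thesis by simp
qed

lemma Hm1_norm_gen:
  fixes P :: "'a::finite \<Rightarrow> 'a \<Rightarrow> real"
  assumes st: "stochastic P" and irr: "irreducible_chain P"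
  shows "Hm1_norm P q (gen P g) = ereal (H1_norm P q g)"
proof -
  define g' where "g' = (SOME g'. gen P g' = gen P g)"
  have "gen P g' = gen P g"
    unfolding g'_def by (rule someI[where x = g]) (rule refl)
  then have "\<And>z. gen P (\<lambda>x. g' x - g x) z = 0"
    by (simp add: gen_diff)
  then have "g' y - g y = g' x - g x" for x y
    using harmonic_imp_constant[OF st irr] by blast
  then have "grad g' = grad g"
    unfolding grad_def by (intro ext) (simp add: algebra_simps)
  then show ?thesis
    unfolding Hm1_norm_def H1_norm_def g'_def[symmetric] by simp
qed

lemma H1_norm_scale: "H1_norm P q (\<lambda>y. c * f y) = \<bar>c\<bar> * H1_norm P q f"
proof -
  have sq: "d * (c * a - c * b)\<^sup>2 = c\<^sup>2 * (d * (a - b)\<^sup>2)" for a b d :: real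
    by (simp add: power2_eq_square algebra_simps)
  have "(\<Sum>(x,y)\<in>edges P. cond P q x y * (grad (\<lambda>y. c * f y) x y)\<^sup>2)
      = c\<^sup>2 * (\<Sum>(x,y)\<in>edges P. cond P q x y * (grad f x y)\<^sup>2)"
    unfolding sum_distrib_left by (intro sum.cong) (auto simp: grad_def sq)
  then show ?thesis
    unfolding H1_norm_def L2C_norm_def by (simp add: real_sqrt_mult)
qed

lemma H1_norm_tendsto:
  assumes "\<And>y. ((\<lambda>h. f h y) \<longlongrightarrow> g y) F"
  shows "((\<lambda>h. H1_norm P q (f h)) \<longlongrightarrow> H1_norm P q g) F"
  unfolding H1_norm_def L2C_norm_def grad_def
  by (intro tendsto_intros tendsto_sum) (auto intro!: tendsto_intros assms)

lemma integral_average_tendsto_at_right: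
  fixes g :: "real \<Rightarrow> real"
  assumes "\<delta> > 0" and "continuous_on {t..t+\<delta>} g"
  shows "((\<lambda>h. (1/h) * integral {t..t+h} g) \<longlongrightarrow> g t) (at_right 0)"
proof -
  have "((\<lambda>u. integral {t..u} g) has_vector_derivative g t) (at t within {t..t+\<delta>})"
    using assms by (intro integral_has_vector_derivative) auto
  then have "((\<lambda>u. integral {t..u} g) has_field_derivative g t) (at_right t)"
    using assms(1) by (simp add: has_real_derivative_iff_has_vector_derivative at_within_Icc_at_right)
  then have "((\<lambda>u. (integral {t..u} g - integral {t..t} g) / (u - t)) \<longlongrightarrow> g t) (at_right t)"
    by (simp add: has_field_derivative_iff)
  then have "((\<lambda>h. (integral {t..h+t} g - integral {t..t} g) / (h + t - t)) \<longlongrightarrow> g t) (at_right 0)"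
    unfolding at_right_to_0[of t] filterlim_filtermap .
  then show ?thesis by (simp add: add.commute)
qed

lemma increment_eq_gen_integral:
  fixes P :: "'a::finite \<Rightarrow> 'a \<Rightarrow> real" and F G :: "real \<Rightarrow> 'a \<Rightarrow> real"
  assumes G_cont: "\<And>y. continuous_on {t..t+\<delta>} (\<lambda>s. G s y)"
    and F_deriv: "\<And>s x. s \<in> {t..t+\<delta>} \<Longrightarrow>
        ((\<lambda>u. F u x) has_real_derivative gen P (G s) x) (at s within {t..t+\<delta>})"
    and h: "h \<in> {0..\<delta>}"
  shows "(\<lambda>x. F (t+h) x - F t x) = gen P (\<lambda>y. integral {t..t+h} (\<lambda>s. G s y))"
proof
  fix x
  have sub: "{t..t+h} \<subseteq> {t..t+\<delta>}"
    using h by auto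
  have "((\<lambda>s. gen P (G s) x) has_integral F (t+h) x - F t x) {t..t+h}"
  proof (rule fundamental_theorem_of_calculus)
    show "t \<le> t + h" using h by simp
  next
    fix s assume "s \<in> {t..t+h}"
    then show "((\<lambda>u. F u x) has_vector_derivative gen P (G s) x) (at s within {t..t+h})"
      using F_deriv[of s x] sub
      by (auto simp: has_real_derivative_iff_has_vector_derivative
               intro: has_vector_derivative_within_subset)
  qed
  moreover have "((\<lambda>s. gen P (G s) x) has_integral
      gen P (\<lambda>y. integral {t..t+h} (\<lambda>s. G s y)) x) {t..t+h}"
    unfolding gen_def
  proof (intro has_integral_sum ballI has_integral_mult_right)
    fix y
    show "((\<lambda>s. G s y) has_integral integral {t..t+h} (\<lambda>s. G s y)) {t..t+h}"
      using continuous_on_subset[OF G_cont sub]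
      by (intro integrable_integral integrable_continuous_interval)
  qed simp
  ultimately show "F (t+h) x - F t x = gen P (\<lambda>y. integral {t..t+h} (\<lambda>s. G s y)) x"
    by (rule has_integral_unique)
qed

lemma Hm1_difference_quotient_tendsto:
  fixes P :: "'a::finite \<Rightarrow> 'a \<Rightarrow> real" and F G :: "real \<Rightarrow> 'a \<Rightarrow> real"
  assumes st: "stochastic P" and irr: "irreducible_chain P" and "\<delta> > 0"
    and G_cont: "\<And>y. continuous_on {t..t+\<delta>} (\<lambda>s. G s y)"
    and F_deriv: "\<And>s x. s \<in> {t..t+\<delta>} \<Longrightarrow>
        ((\<lambda>u. F u x) has_real_derivative gen P (G s) x) (at s within {t..t+\<delta>})"
  shows "((\<lambda>h. ereal (1/h) * Hm1_norm P q (\<lambda>y. F (t+h) y - F t y))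
            \<longlongrightarrow> ereal (H1_norm P q (G t))) (at_right 0)"
proof -
  define I where "I h y = integral {t..t+h} (\<lambda>s. G s y)" for h y
  have "((\<lambda>h. ereal (H1_norm P q (\<lambda>y. (1/h) * I h y))) \<longlongrightarrow> ereal (H1_norm P q (G t)))
      (at_right 0)"
    unfolding I_def using \<open>\<delta> > 0\<close> G_cont
    by (intro tendsto_ereal H1_norm_tendsto integral_average_tendsto_at_right)
  moreover have "eventually (\<lambda>h. h \<in> {0<..\<delta>}) (at_right (0::real))"
    using \<open>\<delta> > 0\<close> by (auto simp: eventually_at_right_field)
  then have "eventually (\<lambda>h. ereal (H1_norm P q (\<lambda>y. (1/h) * I h y)) =
      ereal (1/h) * Hm1_norm P q (\<lambda>y. F (t+h) y - F t y)) (at_right 0)"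
  proof (rule eventually_mono)
    fix h :: real assume h: "h \<in> {0<..\<delta>}"
    then have "(\<lambda>y. F (t+h) y - F t y) = gen P (I h)"
      unfolding I_def by (intro increment_eq_gen_integral[OF G_cont F_deriv]) auto
    moreover have "H1_norm P q (\<lambda>y. (1/h) * I h y) = (1/h) * H1_norm P q (I h)"
      using h by (subst H1_norm_scale) simp
    ultimately show "ereal (H1_norm P q (\<lambda>y. (1/h) * I h y)) =
        ereal (1/h) * Hm1_norm P q (\<lambda>y. F (t+h) y - F t y)"
      by (simp add: Hm1_norm_gen[OF st irr])
  qed
  ultimately show ?thesis
    by (rule Lim_transform_eventually)
qed

lemma invariant_distribution_mpow:
  assumes "invariant_distribution P q"
  shows "(\<Sum>x\<in>UNIV. q x * mpow P n x y) = q y"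
proof (induction n arbitrary: y)
  case 0
  have "(\<Sum>x\<in>UNIV. q x * mpow P 0 x y) = (\<Sum>x\<in>UNIV. if x = y then q x else 0)"
    by (intro sum.cong) auto
  then show ?case by simp
next
  case (Suc n)
  have "(\<Sum>x\<in>UNIV. q x * mpow P (Suc n) x y)
      = (\<Sum>z\<in>UNIV. \<Sum>x\<in>UNIV. q x * (mpow P n x z * P z y))"
    unfolding mpow.simps sum_distrib_left by (rule sum.swap)
  also have "\<dots> = (\<Sum>z\<in>UNIV. (\<Sum>x\<in>UNIV. q x * mpow P n x z) * P z y)"
    by (simp add: sum_distrib_right mult.assoc)
  also have "\<dots> = q y"
    using Suc assms by (simp add: invariant_distribution_def)
  finally show ?case .
qed

lemma invariant_distribution_pos:
  fixes P :: "'a::finite \<Rightarrow> 'a \<Rightarrow> real"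
  assumes st: "stochastic P" and irr: "irreducible_chain P" and inv: "invariant_distribution P q"
  shows "q y > 0"
proof -
  obtain x0 where x0: "q x0 > 0"
    using inv unfolding invariant_distribution_def
    by (metis antisym not_le_imp_less sum.neutral zero_neq_one)
  obtain n where n: "mpow P n x0 y > 0"
    using irr by (auto simp: irreducible_chain_def)
  have "q x0 * mpow P n x0 y \<le> (\<Sum>x\<in>UNIV. q x * mpow P n x y)"
    using inv mpow_nonneg[OF st]
    by (intro member_le_sum) (auto simp: invariant_distribution_def)
  also have "\<dots> = q y"
    using inv by (rule invariant_distribution_mpow)
  finally show ?thesis
    using x0 n by (smt (verit) mult_pos_pos)
qed

lemma kappa_hat_eq_kappa:
  assumes "\<And>y z. q y * kappa P y z = q z * kappa P z y" and "q x \<noteq> 0"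
  shows "kappa_hat P q x y = kappa P x y"
  using assms(1)[of y x] assms(2) by (simp add: kappa_hat_def)

lemma forward_eq_gen_density:
  assumes db: "\<And>y z. q y * kappa P y z = q z * kappa P z y" and q_pos: "\<And>y. q y > 0"
  shows "(\<Sum>z\<in>UNIV. p z * kappa P z x) / q x = gen P (\<lambda>y. p y / q y) x"
  unfolding gen_def sum_divide_distrib
proof (intro sum.cong refl)
  fix z
  show "p z * kappa P z x / q x = kappa P x z * (p z / q z)"
    using db[of z x] q_pos[of x] q_pos[of z] by (simp add: field_simps)
qed

theorem proposition6p5:
  fixes P :: "'a::finite \<Rightarrow> 'a \<Rightarrow> real"
    and q p0 :: "'a \<Rightarrow> real"
    and p :: "real \<Rightarrow> 'a \<Rightarrow> real"
    and \<psi> l\<psi> :: "real \<Rightarrow> 'a \<Rightarrow> real"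
    and t0 \<epsilon> t :: real
  assumes stoch: "stochastic P"
    and irred: "irreducible_chain P"
    and inv: "invariant_distribution P q"
    and db: "\<And>y z. q y * kappa P y z = q z * kappa P z y"
    and p0_pos: "\<And>x. p0 x > 0" and p0_sum: "(\<Sum>x\<in>UNIV. p0 x) = 1"
    and p_init: "p 0 = p0"
    and p_ode: "\<And>s y. s \<ge> 0 \<Longrightarrow>
        ((\<lambda>u. p u y) has_real_derivative (\<Sum>x\<in>UNIV. p s x * kappa P x y)) (at s within {0..})"
    and t0_pos: "t0 > 0" and eps_pos: "\<epsilon> > 0"
    and psi_cont: "\<And>y. continuous_on {t0..<t0+\<epsilon>} (\<lambda>s. \<psi> s y)"
    and lpsi_init: "\<And>x. l\<psi> t0 x = p t0 x / q x"
    and lpsi_ode: "\<And>s x. s \<in> {t0..<t0+\<epsilon>} \<Longrightarrow>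
        ((\<lambda>u. l\<psi> u x) has_real_derivative (\<Sum>y\<in>UNIV. kappa_hat P q x y * \<psi> s y))
          (at s within {t0..<t0+\<epsilon>})"
    and t: "t \<in> {t0..<t0+\<epsilon>}"
  shows "((\<lambda>h. ereal (1/h) * Hm1_norm P q (\<lambda>y. p (t+h) y / q y - p t y / q y))
            \<longlongrightarrow> Hm1_norm P q (gen P (\<lambda>y. p t y / q y))) (at_right 0)
       \<and> Hm1_norm P q (gen P (\<lambda>y. p t y / q y)) = ereal (H1_norm P q (\<lambda>y. p t y / q y))
       \<and> ((\<lambda>h. ereal (1/h) * Hm1_norm P q (\<lambda>y. l\<psi> (t+h) y - l\<psi> t y))
            \<longlongrightarrow> Hm1_norm P q (gen P (\<psi> t))) (at_right 0)
       \<and> Hm1_norm P q (gen P (\<psi> t)) = ereal (H1_norm P q (\<psi> t))"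
proof -
  have q_pos: "\<And>y. q y > 0"
    using invariant_distribution_pos[OF stoch irred inv] .
  have p_deriv: "((\<lambda>u. p u x / q x) has_real_derivative gen P (\<lambda>y. p s y / q y) x)
      (at s within {t..t+1})" if "s \<in> {t..t+1}" for s x
    using that t t0_pos p_ode[of s x] DERIV_subset[of _ _ s "{0..}" "{t..t+1}"]
    by (auto simp: forward_eq_gen_density[OF db q_pos, symmetric] intro!: DERIV_cdivide)
  have "continuous_on {t..t+1} (\<lambda>s. p s y / q y)" for y
    using p_deriv by (intro DERIV_continuous_on) auto
  then have density: "((\<lambda>h. ereal (1/h) * Hm1_norm P q (\<lambda>y. p (t+h) y / q y - p t y / q y))
      \<longlongrightarrow> ereal (H1_norm P q (\<lambda>y. p t y / q y))) (at_right 0)"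
    using Hm1_difference_quotient_tendsto[OF stoch irred, of 1 t "\<lambda>s y. p s y / q y" "\<lambda>s y. p s y / q y" q] p_deriv
    by simp
  define \<delta> where "\<delta> = (t0 + \<epsilon> - t) / 2"
  have "\<delta> > 0" and sub: "{t..t+\<delta>} \<subseteq> {t0..<t0+\<epsilon>}"
    using t by (auto simp: \<delta>_def field_simps)
  have "((\<lambda>u. l\<psi> u x) has_real_derivative gen P (\<psi> s) x) (at s within {t..t+\<delta>})"
    if "s \<in> {t..t+\<delta>}" for s x
    using DERIV_subset[OF lpsi_ode sub] that sub kappa_hat_eq_kappa[OF db] q_pos
    by (simp add: subset_iff gen_def less_imp_neq[symmetric])
  then have psi: "((\<lambda>h. ereal (1/h) * Hm1_norm P q (\<lambda>y. l\<psi> (t+h) y - l\<psi> t y))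
      \<longlongrightarrow> ereal (H1_norm P q (\<psi> t))) (at_right 0)"
    using Hm1_difference_quotient_tendsto[OF stoch irred \<open>\<delta> > 0\<close>, of t \<psi> l\<psi>]
      continuous_on_subset[OF psi_cont sub] by simp
  show ?thesis
    using density psi by (simp add: Hm1_norm_gen[OF stoch irred])
qed

end
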